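(* Let $a,b\ge1$, $n=a+b+1$, $f=a+1$, and let $G$ be the $n\times n$ symmetric matrix with $G_{ii}=2$ for $i\neq f$, $G_{ff}=0$, $G_{i,i+1}=G_{i+1,i}=-1$ for $1\le i<n$, and all other entries $0$. With $m^S$ defined from $G$, $f$, $r',r''$ by $m^S_{ij}=r'G_{ij}$ for $i,j\le f$, $(i,j)\ne(f,f)$; $m^S_{ij}=r''G_{ij}$ for $i,j\ge f$, $(i,j)\neq(f,f)$; $m^S_{ij}=0$ if $i<f<j$ or $j<f<i$; $m^S_{ff}=1$: the matrix $m^S$ is positive definite with all diagonal entries $\le1$ if and only if $$0<r'\le\tfrac12,\qquad 0<r''\le\tfrac12,\qquad \tfrac{a}{a+1}r'+\tfrac{b}{b+1}r''<1.$$
   Context: This is the standard-chamber Gram matrix for the Lie superalgebra $A(a,b)$ rescaled by $r'$ on the bosonic part of type $A_a$ and by $r''$ on the bosonic part of type $A_b$, with fermionic simple root $\alpha_f$ of squared length $1$. *)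

theory Defs
  imports Complex_Main
begin

text \<open>Matrices of size n are represented as functions nat => nat => real,
  with indices ranging over {1..n}.\<close>

definition gramA :: "nat \<Rightarrow> nat \<Rightarrow> nat \<Rightarrow> nat \<Rightarrow> real" where
  "gramA a b i j =
     (let f = a + 1 in
      if i = j then (if i = f then 0 else 2)
      else if i + 1 = j \<or> j + 1 = i then -1
      else 0)"

definition mS :: "nat \<Rightarrow> nat \<Rightarrow> real \<Rightarrow> real \<Rightarrow> nat \<Rightarrow> nat \<Rightarrow> real" where
  "mS a b r' r'' i j =
     (let f = a + 1 in
      if i = f \<and> j = f then 1
      else if i \<le> f \<and> j \<le> f then r' * gramA a b i j
      else if f \<le> i \<and> f \<le> j then r'' * gramA a b i j
      else 0)"

definition pos_def :: "nat \<Rightarrow> (nat \<Rightarrow> nat \<Rightarrow> real) \<Rightarrow> bool" where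
  "pos_def n M \<longleftrightarrow>
     (\<forall>i\<in>{1..n}. \<forall>j\<in>{1..n}. M i j = M j i) \<and>
     (\<forall>x :: nat \<Rightarrow> real. (\<exists>i\<in>{1..n}. x i \<noteq> 0) \<longrightarrow>
        (\<Sum>i=1..n. \<Sum>j=1..n. x i * M i j * x j) > 0)"

end

theory Submission
  imports Defs
begin

text \<open>The quadratic form of \<open>m\<^sup>S\<close> splits along the fermionic node \<open>f\<close>:
  \<open>Q(x) = r'\<cdot>C\<^sub>a(L) + x\<^sub>f\<^sup>2 + r''\<cdot>C\<^sub>b(R)\<close>, where \<open>L\<close> and \<open>R\<close> are the two arms of the
  Dynkin chain read outwards from \<open>f\<close> and \<open>C\<^sub>k\<close> is the \<open>A\<^sub>k\<close> form of an arm together with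
  its coupling to \<open>x\<^sub>f\<close>. Completing squares along an arm gives
  \<open>C\<^sub>k \<ge> -k/(k+1)\<cdot>x\<^sub>f\<^sup>2\<close>, with equality exactly for the linear profile that decays from
  \<open>x\<^sub>f\<close> to \<open>0\<close>. Hence \<open>Q(x) \<ge> (1 - a/(a+1)\<cdot>r' - b/(b+1)\<cdot>r'')\<cdot>x\<^sub>f\<^sup>2\<close> with
  equality on the two linear profiles, which yields the weighted condition; positivity
  of \<open>r'\<close>, \<open>r''\<close> and the bound \<open>1/2\<close> come from the diagonal entries \<open>2r'\<close>, \<open>2r''\<close>.\<close>

(* y 0 is the value at the fermionic node, y 1, ..., y k the arm read outwards from it. *)
definition chain_form :: "(nat \<Rightarrow> real) \<Rightarrow> nat \<Rightarrow> real" where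
  "chain_form y k = (\<Sum>i<k. 2 * (y (Suc i))\<^sup>2 - 2 * y i * y (Suc i))"

lemma chain_form_Suc:
  "chain_form y (Suc k) = 2 * (y 1)\<^sup>2 - 2 * y 0 * y 1 + chain_form (\<lambda>i. y (Suc i)) k"
  unfolding chain_form_def by (subst sum.lessThan_Suc_shift) simp

lemma chain_form_complete_square:
  "chain_form y (Suc k) + real (Suc k) / (real (Suc k) + 1) * (y 0)\<^sup>2
   = (chain_form (\<lambda>i. y (Suc i)) k + real k / (real k + 1) * (y 1)\<^sup>2)
     + ((real k + 2) * y 1 - (real k + 1) * y 0)\<^sup>2 / ((real k + 1) * (real k + 2))"
proof -
  have "2 * t\<^sup>2 - 2 * t * s + (real k + 1) / (real k + 2) * s\<^sup>2 - real k / (real k + 1) * t\<^sup>2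
    = ((real k + 2) * t - (real k + 1) * s)\<^sup>2 / ((real k + 1) * (real k + 2))" for t s :: real
    by (simp add: field_simps power2_eq_square)
  from this[of "y 1" "y 0"] show ?thesis
    unfolding chain_form_Suc by (simp add: algebra_simps)
qed

lemma chain_form_lower_bound: "0 \<le> chain_form y k + real k / (real k + 1) * (y 0)\<^sup>2"
proof (induction k arbitrary: y)
  case 0
  then show ?case by (simp add: chain_form_def)
next
  case (Suc k)
  then show ?case
    using chain_form_complete_square[of y k] Suc.IH[of "\<lambda>i. y (Suc i)"] by simp
qed

lemma chain_form_lower_bound_eq_iff:
  "chain_form y k + real k / (real k + 1) * (y 0)\<^sup>2 = 0
   \<longleftrightarrow> (\<forall>i\<le>k. y i = (real k + 1 - real i) / (real k + 1) * y 0)"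
proof (induction k arbitrary: y)
  case 0
  then show ?case by (simp add: chain_form_def)
next
  case (Suc k)
  let ?z = "\<lambda>i. y (Suc i)"
  let ?sq = "((real k + 2) * y 1 - (real k + 1) * y 0)\<^sup>2 / ((real k + 1) * (real k + 2))"
  have "chain_form y (Suc k) + real (Suc k) / (real (Suc k) + 1) * (y 0)\<^sup>2 = 0
      \<longleftrightarrow> chain_form ?z k + real k / (real k + 1) * (?z 0)\<^sup>2 = 0 \<and> ?sq = 0"
    using chain_form_complete_square[of y k] chain_form_lower_bound[of ?z k]
    by (simp add: add_nonneg_eq_0_iff)
  also have "?sq = 0 \<longleftrightarrow> y 1 = (real k + 1) / (real k + 2) * y 0"
    by (simp add: field_simps add_nonneg_eq_0_iff)
  also have "chain_form ?z k + real k / (real k + 1) * (?z 0)\<^sup>2 = 0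
      \<longleftrightarrow> (\<forall>i\<le>k. y (Suc i) = (real k + 1 - real i) / (real k + 1) * y 1)"
    using Suc.IH by simp
  also have "\<dots> \<and> y 1 = (real k + 1) / (real k + 2) * y 0
      \<longleftrightarrow> (\<forall>i\<le>Suc k. y i = (real (Suc k) + 1 - real i) / (real (Suc k) + 1) * y 0)"
    (is "?prev \<and> ?y1 \<longleftrightarrow> (\<forall>i\<le>Suc k. ?Q i)")
  proof -
    have shift: "(real k + 1 - real i) / (real k + 1) * ((real k + 1) / (real k + 2) * y 0)
        = (real (Suc k) + 1 - real (Suc i)) / (real (Suc k) + 1) * y 0" for i
    proof -
      have "real k + 1 \<noteq> 0" by linarith
      then show ?thesis by (simp add: add.commute)
    qed
    have y1: "?y1 \<longleftrightarrow> ?Q 1"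
      by (simp add: add.commute)
    have split: "(\<forall>i\<le>Suc k. ?Q i) \<longleftrightarrow> ?Q 0 \<and> (\<forall>i\<le>k. ?Q (Suc i))"
      using All_less_Suc2[of "Suc k" ?Q] by (simp only: less_Suc_eq_le)
    have "?prev \<longleftrightarrow> (\<forall>i\<le>k. ?Q (Suc i))" if ?y1
      using that by (simp only: shift)
    moreover have "?y1" if "\<forall>i\<le>k. ?Q (Suc i)"
      using that[rule_format, of 0] y1 by simp
    moreover have "?Q 0" by simp
    ultimately show ?thesis
      unfolding split by blast
  qed
  finally show ?case .
qed

definition quad_form :: "nat \<Rightarrow> (nat \<Rightarrow> nat \<Rightarrow> real) \<Rightarrow> (nat \<Rightarrow> real) \<Rightarrow> real" where
  "quad_form n M x = (\<Sum>i=1..n. \<Sum>j=1..n. x i * M i j * x j)"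

lemma quad_form_Suc:
  "quad_form (Suc n) M x = quad_form n M x
     + (\<Sum>j=1..n. (M (Suc n) j + M j (Suc n)) * x j * x (Suc n)) + M (Suc n) (Suc n) * (x (Suc n))\<^sup>2"
  unfolding quad_form_def
  by (simp add: sum.distrib sum_distrib_left sum_distrib_right algebra_simps power2_eq_square)

lemma quad_form_tridiagonal:
  assumes "\<And>i j. Suc i < j \<Longrightarrow> M i j = 0" and "\<And>i j. Suc j < i \<Longrightarrow> M i j = 0"
  shows "quad_form n M x = (\<Sum>i=1..n. M i i * (x i)\<^sup>2)
     + (\<Sum>i=1..<n. (M i (Suc i) + M (Suc i) i) * x i * x (Suc i))"
proof (induction n)
  case 0
  then show ?case by (simp add: quad_form_def)
next
  case (Suc n)
  have "(\<Sum>j=1..n. (M (Suc n) j + M j (Suc n)) * x j * x (Suc n))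
      = (\<Sum>j=1..n. if j = n then (M n (Suc n) + M (Suc n) n) * x n * x (Suc n) else 0)"
    by (rule sum.cong) (auto simp: assms)
  then show ?case
    using Suc.IH by (cases n) (simp_all add: quad_form_Suc)
qed

lemma quad_form_unit_vector:
  assumes "p \<in> {1..n}"
  shows "quad_form n M (\<lambda>i. if i = p then 1 else 0) = M p p"
proof -
  have "(\<Sum>j=1..n. (if i = p then 1 else 0) * M i j * (if j = p then 1 else 0))
      = (if i = p then M p p else 0)" for i
    using assms by (simp add: if_distrib cong: if_cong)
  then show ?thesis
    using assms by (simp add: quad_form_def)
qed

lemma mS_diag: "mS a b r' r'' i i = (if i \<le> a then 2 * r' else if i = a + 1 then 1 else 2 * r'')"
  unfolding mS_def gramA_def Let_def by auto

lemma mS_superdiag: "mS a b r' r'' i (Suc i) = (if i \<le> a then - r' else - r'')"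
  unfolding mS_def gramA_def Let_def by auto

lemma mS_sym: "mS a b r' r'' i j = mS a b r' r'' j i"
  unfolding mS_def gramA_def Let_def by auto

lemma mS_tridiagonal: "Suc i < j \<or> Suc j < i \<Longrightarrow> mS a b r' r'' i j = 0"
  unfolding mS_def gramA_def Let_def by auto

lemma chain_form_shift:
  "chain_form (\<lambda>i. x (m + i)) k = (\<Sum>i=m..<m+k. 2 * (x (Suc i))\<^sup>2 - 2 * x i * x (Suc i))"
  unfolding chain_form_def
  using sum.shift_bounds_nat_ivl[of "\<lambda>i. 2 * (x (Suc i))\<^sup>2 - 2 * x i * x (Suc i)" 0 m k]
  by (simp add: atLeast0LessThan add.commute)

lemma chain_form_reverse:
  "chain_form (\<lambda>i. x (Suc m - i)) m = (\<Sum>i=1..m. 2 * (x i)\<^sup>2 - 2 * x i * x (Suc i))"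
proof -
  let ?g = "\<lambda>j. 2 * (x (Suc j))\<^sup>2 - 2 * x (Suc j) * x (Suc (Suc j))"
  have "chain_form (\<lambda>i. x (Suc m - i)) m = (\<Sum>i<m. ?g (m - Suc i))"
    unfolding chain_form_def by (rule sum.cong) (simp_all add: Suc_diff_Suc Suc_diff_le mult.commute)
  also have "\<dots> = (\<Sum>i<m. ?g i)"
    by (rule sum.nat_diff_reindex)
  also have "\<dots> = (\<Sum>i=1..m. 2 * (x i)\<^sup>2 - 2 * x i * x (Suc i))"
    using sum.atLeast1_atMost_eq[of "\<lambda>i. 2 * (x i)\<^sup>2 - 2 * x i * x (Suc i)" m] by simp
  finally show ?thesis .
qed

lemma sum_atLeastAtMost_split_around:
  fixes a b :: nat
  shows "(\<Sum>i=1..a + b + 1. g i) = (\<Sum>i=1..a. g i) + g (a + 1) + (\<Sum>i=a + 1..<a + 1 + b. g (Suc i))"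
  by (induction b) (simp_all add: add.assoc)

lemma sum_atLeastLessThan_split:
  fixes a b :: nat
  shows "(\<Sum>i=1..<a + b + 1. g i) = (\<Sum>i=1..a. g i) + (\<Sum>i=a + 1..<a + 1 + b. g i)"
  using sum.atLeastLessThan_concat[of 1 "a + 1" "a + b + 1" g]
  by (simp add: atLeastLessThanSuc_atLeastAtMost add.commute)

lemma quad_form_mS:
  "quad_form (a + b + 1) (mS a b r' r'') x
   = r' * chain_form (\<lambda>i. x (Suc a - i)) a + (x (a + 1))\<^sup>2 + r'' * chain_form (\<lambda>i. x (a + 1 + i)) b"
proof -
  let ?M = "mS a b r' r''"
  have "quad_form (a + b + 1) ?M x = (\<Sum>i=1..a + b + 1. ?M i i * (x i)\<^sup>2)
      + (\<Sum>i=1..<a + b + 1. (?M i (Suc i) + ?M (Suc i) i) * x i * x (Suc i))"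
    by (rule quad_form_tridiagonal) (simp_all add: mS_tridiagonal)
  also have "(\<Sum>i=1..a + b + 1. ?M i i * (x i)\<^sup>2)
      = (\<Sum>i=1..a. 2 * r' * (x i)\<^sup>2) + (x (a + 1))\<^sup>2 + (\<Sum>i=a + 1..<a + 1 + b. 2 * r'' * (x (Suc i))\<^sup>2)"
    unfolding sum_atLeastAtMost_split_around by (simp add: mS_diag)
  also have "(\<Sum>i=1..<a + b + 1. (?M i (Suc i) + ?M (Suc i) i) * x i * x (Suc i))
      = (\<Sum>i=1..a. - 2 * r' * x i * x (Suc i)) + (\<Sum>i=a + 1..<a + 1 + b. - 2 * r'' * x i * x (Suc i))"
    unfolding sum_atLeastLessThan_split
    by (intro arg_cong2[where f = "(+)"] sum.cong) (auto simp: mS_superdiag mS_sym[of a b r' r'' "Suc i" i for i])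
  finally show ?thesis
    unfolding chain_form_reverse chain_form_shift
    by (simp add: sum_distrib_left sum_subtractf sum_negf algebra_simps del: sum.cl_ivl_Suc sum.op_ivl_Suc)
qed

lemma pos_def_iff_quad_form:
  "pos_def n M \<longleftrightarrow> (\<forall>i\<in>{1..n}. \<forall>j\<in>{1..n}. M i j = M j i) \<and>
     (\<forall>x. (\<exists>i\<in>{1..n}. x i \<noteq> 0) \<longrightarrow> 0 < quad_form n M x)"
  unfolding pos_def_def quad_form_def ..

lemma pos_def_diag_pos:
  assumes "pos_def n M" and "p \<in> {1..n}"
  shows "0 < M p p"
proof -
  have "0 < quad_form n M (\<lambda>i. if i = p then 1 else 0)"
    using assms unfolding pos_def_iff_quad_form by force
  then show ?thesis
    using quad_form_unit_vector[OF assms(2)] by simp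
qed

lemma chain_form_linear_profile:
  assumes "\<forall>i\<le>k. y i = (real k + 1 - real i) / (real k + 1)"
  shows "chain_form y k = - (real k / (real k + 1))"
proof -
  have "chain_form y k + real k / (real k + 1) * (y 0)\<^sup>2 = 0"
    using assms by (subst chain_form_lower_bound_eq_iff) simp
  moreover have "y 0 = 1"
    using assms by simp
  ultimately show ?thesis by simp
qed

lemma mS_diag_le_one_iff:
  assumes "1 \<le> a" and "1 \<le> b"
  shows "(\<forall>i\<in>{1..a + b + 1}. mS a b r' r'' i i \<le> 1) \<longleftrightarrow> r' \<le> 1/2 \<and> r'' \<le> 1/2"
proof
  assume "\<forall>i\<in>{1..a + b + 1}. mS a b r' r'' i i \<le> 1"
  then have "mS a b r' r'' 1 1 \<le> 1" and "mS a b r' r'' (a + b + 1) (a + b + 1) \<le> 1"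
    by auto
  then show "r' \<le> 1/2 \<and> r'' \<le> 1/2"
    using assms by (simp add: mS_diag)
next
  assume "r' \<le> 1/2 \<and> r'' \<le> 1/2"
  then show "\<forall>i\<in>{1..a + b + 1}. mS a b r' r'' i i \<le> 1"
    by (simp add: mS_diag)
qed

lemma quad_form_mS_pos:
  assumes "0 < r'" and "0 < r''" and "real a / real (a + 1) * r' + real b / real (b + 1) * r'' < 1"
    and "\<exists>i\<in>{1..a + b + 1}. x i \<noteq> 0"
  shows "0 < quad_form (a + b + 1) (mS a b r' r'') x"
proof (rule ccontr)
  assume nonpos: "\<not> 0 < quad_form (a + b + 1) (mS a b r' r'') x"
  define yL where "yL i = x (Suc a - i)" for i
  define yR where "yR i = x (a + 1 + i)" for i
  define PL where "PL = chain_form yL a + real a / (real a + 1) * (yL 0)\<^sup>2"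
  define PR where "PR = chain_form yR b + real b / (real b + 1) * (yR 0)\<^sup>2"
  define c where "c = 1 - real a / (real a + 1) * r' - real b / (real b + 1) * r''"
  have "quad_form (a + b + 1) (mS a b r' r'') x = r' * PL + r'' * PR + c * (x (a + 1))\<^sup>2"
    unfolding quad_form_mS PL_def PR_def c_def yL_def yR_def by (simp add: algebra_simps)
  moreover have "0 \<le> r' * PL" and "0 \<le> r'' * PR"
    using assms(1,2) chain_form_lower_bound[of yL a] chain_form_lower_bound[of yR b]
    unfolding PL_def PR_def by simp_all
  moreover have "0 < c"
    using assms(3) unfolding c_def by (simp add: add.commute)
  ultimately have "r' * PL = 0" and "r'' * PR = 0" and "c * (x (a + 1))\<^sup>2 = 0"
    using nonpos zero_le_power2[of "x (a + 1)"] mult_nonneg_nonneg[of c "(x (a + 1))\<^sup>2"] by linarith+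
  then have "PL = 0" and "PR = 0" and "yL 0 = 0" and "yR 0 = 0"
    using assms(1,2) \<open>0 < c\<close> by (simp_all add: yL_def yR_def)
  then have yL0: "\<forall>i\<le>a. yL i = 0" and yR0: "\<forall>i\<le>b. yR i = 0"
    unfolding PL_def PR_def chain_form_lower_bound_eq_iff by simp_all
  have "x i = 0" if "i \<in> {1..a + b + 1}" for i
  proof (cases "i \<le> a + 1")
    case True
    then have "yL (Suc a - i) = 0" using yL0 that by simp
    with True show ?thesis by (simp add: yL_def)
  next
    case False
    then have "yR (i - (a + 1)) = 0" using yR0 that by simp
    with False show ?thesis by (simp add: yR_def)
  qed
  then show False
    using assms(4) by blast
qed

lemma pos_def_mS_iff:
  assumes "1 \<le> a" and "1 \<le> b"
  shows "pos_def (a + b + 1) (mS a b r' r'') \<longleftrightarrow>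
    0 < r' \<and> 0 < r'' \<and> real a / real (a + 1) * r' + real b / real (b + 1) * r'' < 1"
proof
  assume pd: "pos_def (a + b + 1) (mS a b r' r'')"
  define x where "x i = (if i \<le> a + 1 then real i / (real a + 1) else (real (a + b + 2) - real i) / (real b + 1))" for i
  have "0 < mS a b r' r'' 1 1" and "0 < mS a b r' r'' (a + b + 1) (a + b + 1)"
    using pos_def_diag_pos[OF pd] by simp_all
  then have "0 < r'" and "0 < r''"
    using assms by (simp_all add: mS_diag)
  moreover have "chain_form (\<lambda>i. x (Suc a - i)) a = - (real a / (real a + 1))"
    by (rule chain_form_linear_profile) (auto simp: x_def of_nat_diff)
  moreover have "chain_form (\<lambda>i. x (a + 1 + i)) b = - (real b / (real b + 1))"
    by (rule chain_form_linear_profile) (auto simp: x_def)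
  moreover have "0 < quad_form (a + b + 1) (mS a b r' r'') x"
    using pd unfolding pos_def_iff_quad_form by (force simp: x_def)
  ultimately show "0 < r' \<and> 0 < r'' \<and> real a / real (a + 1) * r' + real b / real (b + 1) * r'' < 1"
    unfolding quad_form_mS by (simp add: x_def algebra_simps)
next
  assume "0 < r' \<and> 0 < r'' \<and> real a / real (a + 1) * r' + real b / real (b + 1) * r'' < 1"
  then show "pos_def (a + b + 1) (mS a b r' r'')"
    unfolding pos_def_iff_quad_form using quad_form_mS_pos mS_sym by blast
qed

theorem mainTheorem8:
  fixes a b :: nat and r' r'' :: real
  assumes "a \<ge> 1" and "b \<ge> 1"
  shows "(pos_def (a + b + 1) (mS a b r' r'') \<and>
          (\<forall>i\<in>{1..a + b + 1}. mS a b r' r'' i i \<le> 1))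
     \<longleftrightarrow> (0 < r' \<and> r' \<le> 1/2 \<and> 0 < r'' \<and> r'' \<le> 1/2 \<and>
          real a / real (a + 1) * r' + real b / real (b + 1) * r'' < 1)"
  using pos_def_mS_iff[OF assms] mS_diag_le_one_iff[OF assms] by auto

end
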